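(* Let $(E,d)$ be a Polish space, $p>1$ and $\mu\in(0,1)$. There is a constant $C>0$ such that for every $f\in D^{\mu}([0,1],E)$, \[ [f]_{\mu}+|f]_{\mu}+[f|_{\mu}\le C\left([[f]]_{\mu,p}+||f]]_{\mu,p}+[[f||_{\mu,p}\right). \] Moreover, if $E=\mathbf{R}^{d}$ with $d(x,y)=|x-y|$, then for every $f\in D^{\mu}([0,1],\mathbf{R}^d)$, \[ \sup_{0\le t\le 1}|f(t)|\le C\left(|f|_{L_p([0,1])}+[[f]]_{\mu,p}+||f]]_{\mu,p}+[[f||_{\mu,p}\right). \]
   Context: $D([0,1],E)$ denotes the space of $E$-valued càdlàg functions on $[0,1]$. For $0\le s\le t\le u\le 1$, $\Delta(f;s,t,u)=d(f(s),f(t))\wedge d(f(t),f(u))$. For $\mu\in(0,1)$, $[f]_{\mu}=\sup_{0\le s\le t\le u\le 1}\frac{\Delta(f;s,t,u)}{|u-s|^{\mu}}$, $|f]_{\mu}=\sup_{t\in(0,1]}\frac{d(f(0),f(t))}{t^{\mu}}$, $[f|_{\mu}=\sup_{t\in[0,1)}\frac{d(f(1),f(t))}{|1-t|^{\mu}}$, and $D^{\mu}([0,1],E)$ is the set of $f\in D([0,1],E)$ with $[f]_\mu+|f]_\mu+[f|_\mu<\infty$. For $p>1$: $[[f]]_{\mu,p}=\left(\iiint_{0\le s<t<u\le 1}\frac{\Delta(f;s,t,u)^{p}}{|u-s|^{\mu p+3}}\,ds\,dt\,du\right)^{1/p}$, $||f]]_{\mu,p}=\left(\int_0^1\frac{d(f(0),f(t))^{p}}{t^{\mu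 p+1}}dt\right)^{1/p}$, $[[f||_{\mu,p}=\left(\int_0^1\frac{d(f(1),f(t))^{p}}{|1-t|^{\mu p+1}}dt\right)^{1/p}$. *)

theory Defs
  imports "HOL-Analysis.Analysis"
begin

text \<open>Cadlag functions on [0,1]: right-continuous on [0,1), left limits on (0,1].
  Only the values on [0,1] matter.\<close>
definition cadlag :: "(real \<Rightarrow> 'a::metric_space) \<Rightarrow> bool" where
  "cadlag f \<longleftrightarrow> (\<forall>t\<in>{0..<1}. (f \<longlongrightarrow> f t) (at_right t))
                 \<and> (\<forall>t\<in>{0<..1}. \<exists>l. (f \<longlongrightarrow> l) (at_left t))"

definition Delta :: "(real \<Rightarrow> 'a::metric_space) \<Rightarrow> real \<Rightarrow> real \<Rightarrow> real \<Rightarrow> real" where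
  "Delta f s t u = min (dist (f s) (f t)) (dist (f t) (f u))"

definition hol_mid_set :: "real \<Rightarrow> (real \<Rightarrow> 'a::metric_space) \<Rightarrow> real set" where
  "hol_mid_set \<mu> f = {Delta f s t u / \<bar>u - s\<bar> powr \<mu> | s t u. 0 \<le> s \<and> s \<le> t \<and> t \<le> u \<and> u \<le> 1}"

definition hol_left_set :: "real \<Rightarrow> (real \<Rightarrow> 'a::metric_space) \<Rightarrow> real set" where
  "hol_left_set \<mu> f = {dist (f 0) (f t) / t powr \<mu> | t. t \<in> {0<..1}}"

definition hol_right_set :: "real \<Rightarrow> (real \<Rightarrow> 'a::metric_space) \<Rightarrow> real set" where
  "hol_right_set \<mu> f = {dist (f 1) (f t) / \<bar>1 - t\<bar> powr \<mu> | t. t \<in> {0..<1}}"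

definition hol_mid :: "real \<Rightarrow> (real \<Rightarrow> 'a::metric_space) \<Rightarrow> real" where
  "hol_mid \<mu> f = Sup (hol_mid_set \<mu> f)"
definition hol_left :: "real \<Rightarrow> (real \<Rightarrow> 'a::metric_space) \<Rightarrow> real" where
  "hol_left \<mu> f = Sup (hol_left_set \<mu> f)"
definition hol_right :: "real \<Rightarrow> (real \<Rightarrow> 'a::metric_space) \<Rightarrow> real" where
  "hol_right \<mu> f = Sup (hol_right_set \<mu> f)"

definition Dmu :: "real \<Rightarrow> (real \<Rightarrow> 'a::metric_space) set" where
  "Dmu \<mu> = {f. cadlag f \<and> bdd_above (hol_mid_set \<mu> f) \<and> bdd_above (hol_left_set \<mu> f)
               \<and> bdd_above (hol_right_set \<mu> f)}"

text \<open>The p-th powers of the integral seminorms, as (possibly infinite) nonnegative integrals.\<close>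
definition int_mid_pow :: "real \<Rightarrow> real \<Rightarrow> (real \<Rightarrow> 'a::metric_space) \<Rightarrow> ennreal" where
  "int_mid_pow \<mu> p f = (\<integral>\<^sup>+ x. indicator {(s,t,u). 0 \<le> s \<and> s < t \<and> t < u \<and> u \<le> 1} x *
      ennreal (case x of (s,t,u) \<Rightarrow> Delta f s t u powr p / \<bar>u - s\<bar> powr (\<mu> * p + 3))
      \<partial>(lborel \<Otimes>\<^sub>M lborel \<Otimes>\<^sub>M lborel))"

definition int_left_pow :: "real \<Rightarrow> real \<Rightarrow> (real \<Rightarrow> 'a::metric_space) \<Rightarrow> ennreal" where
  "int_left_pow \<mu> p f = (\<integral>\<^sup>+ t. indicator {0..1} t *
      ennreal (dist (f 0) (f t) powr p / t powr (\<mu> * p + 1)) \<partial>lborel)"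

definition int_right_pow :: "real \<Rightarrow> real \<Rightarrow> (real \<Rightarrow> 'a::metric_space) \<Rightarrow> ennreal" where
  "int_right_pow \<mu> p f = (\<integral>\<^sup>+ t. indicator {0..1} t *
      ennreal (dist (f 1) (f t) powr p / \<bar>1 - t\<bar> powr (\<mu> * p + 1)) \<partial>lborel)"

definition Lp_pow :: "real \<Rightarrow> (real \<Rightarrow> 'a::real_normed_vector) \<Rightarrow> ennreal" where
  "Lp_pow p f = (\<integral>\<^sup>+ t. indicator {0..1} t * ennreal (norm (f t) powr p) \<partial>lborel)"

end

(* Write H for the sum of the three Hoelder seminorms of f, finite since f is in D^mu.
   Next to every point q there is an interval of length g on which f stays within
   2 H (4g)^mu of f(q): if the interval left of q fails, the jump found there forces f to be
   flat right of q.  If Delta(f;s,t,u) >= c + 4 H (4g)^mu with g = eta (u - s), such intervals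
   near s, t, u span a cube of volume g^3 on which Delta(f;.) >= c, so the triple integral is
   at least g^3 c^p / (2(u - s))^(mu p + 3).  This gives
   Delta(f;s,t,u) <= (4 H (4 eta)^mu + K(eta) [[f]]_{mu,p}) (u - s)^mu, and the endpoint
   seminorms are handled in the same way with one interval.  For (4 eta)^mu = 1/16 the
   H-terms add up to H/2 and are absorbed into the left-hand side.  For the sup bound,
   |f(t)| >= |f(0)| - |f]_mu on [0,1], so the L_p norm controls |f(0)|. *)

theory Submission
  imports Defs
begin

lemma nn_integral_ge_const_on:
  fixes F :: "'a \<Rightarrow> ennreal"
  assumes "S \<in> sets M" and "\<And>x. x \<in> S \<Longrightarrow> k \<le> F x"
  shows "k * emeasure M S \<le> (\<integral>\<^sup>+x. F x \<partial>M)"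
proof -
  have "k * emeasure M S = (\<integral>\<^sup>+x. k * indicator S x \<partial>M)"
    by (simp add: nn_integral_cmult_indicator assms(1))
  also have "\<dots> \<le> (\<integral>\<^sup>+x. F x \<partial>M)"
    by (intro nn_integral_mono) (auto simp: indicator_def assms(2))
  finally show ?thesis .
qed

lemma emeasure_lborel3_cube:
  fixes a1 a2 a3 g :: real
  assumes "0 \<le> g"
  shows "emeasure (lborel \<Otimes>\<^sub>M lborel \<Otimes>\<^sub>M lborel) ({a1<..<a1+g} \<times> {a2<..<a2+g} \<times> {a3<..<a3+g})
     = ennreal (g^3)"
proof -
  have "sigma_finite_measure (lborel \<Otimes>\<^sub>M lborel :: (real \<times> real) measure)"
    by (intro sigma_finite_pair_measure lborel.sigma_finite_measure_axioms)
  then have "emeasure (lborel \<Otimes>\<^sub>M lborel \<Otimes>\<^sub>M lborel) ({a1<..<a1+g} \<times> {a2<..<a2+g} \<times> {a3<..<a3+g})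
      = emeasure lborel {a1<..<a1+g} * (emeasure lborel {a2<..<a2+g} * emeasure lborel {a3<..<a3+g})"
    by (simp add: sigma_finite_measure.emeasure_pair_measure_Times lborel.emeasure_pair_measure_Times)
  then show ?thesis
    using assms by (simp add: ennreal_mult' power3_eq_cube mult.assoc)
qed

lemma int_mid_pow_ge_box:
  fixes f :: "real \<Rightarrow> 'a::metric_space"
  assumes "0 < g" "0 \<le> c" "0 < p" "0 \<le> \<mu>"
    and "0 \<le> a1" "a1 + g \<le> a2" "a2 + g \<le> a3" "a3 + g \<le> 1" "a3 + g - a1 \<le> D"
    and Delta_ge: "\<And>x y z. x \<in> {a1<..<a1+g} \<Longrightarrow> y \<in> {a2<..<a2+g} \<Longrightarrow> z \<in> {a3<..<a3+g} \<Longrightarrow>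
      c \<le> Delta f x y z"
  shows "ennreal (g^3 * c powr p / D powr (\<mu> * p + 3)) \<le> int_mid_pow \<mu> p f"
proof -
  let ?S = "{a1<..<a1+g} \<times> {a2<..<a2+g} \<times> {a3<..<a3+g}"
  let ?k = "c powr p / D powr (\<mu> * p + 3)"
  have "ennreal ?k \<le> indicator {(s,t,u). 0 \<le> s \<and> s < t \<and> t < u \<and> u \<le> 1} x *
      ennreal (case x of (s,t,u) \<Rightarrow> Delta f s t u powr p / \<bar>u - s\<bar> powr (\<mu> * p + 3))"
    if "x \<in> ?S" for x
  proof -
    obtain s t u where x: "x = (s, t, u)" by (cases x)
    with that have stu: "s \<in> {a1<..<a1+g}" "t \<in> {a2<..<a2+g}" "u \<in> {a3<..<a3+g}" by auto
    have "c powr p \<le> Delta f s t u powr p"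
      using Delta_ge[OF stu] assms(2,3) by (intro powr_mono2) auto
    moreover have "\<bar>u - s\<bar> powr (\<mu> * p + 3) \<le> D powr (\<mu> * p + 3)"
      using stu assms by (intro powr_mono2) auto
    moreover have "0 < \<bar>u - s\<bar> powr (\<mu> * p + 3)"
      using stu assms by auto
    ultimately have "?k \<le> Delta f s t u powr p / \<bar>u - s\<bar> powr (\<mu> * p + 3)"
      using assms(2) by (intro frac_le) auto
    then show ?thesis
      using stu assms x by (auto intro: ennreal_leI)
  qed
  then have "ennreal ?k * emeasure (lborel \<Otimes>\<^sub>M lborel \<Otimes>\<^sub>M lborel) ?S \<le> int_mid_pow \<mu> p f"
    unfolding int_mid_pow_def by (intro nn_integral_ge_const_on) auto
  then show ?thesis
    using assms(1,2) by (simp add: emeasure_lborel3_cube ennreal_mult[symmetric] mult.commute)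
qed

definition endpoint_int_pow :: "real \<Rightarrow> real \<Rightarrow> real \<Rightarrow> (real \<Rightarrow> 'a::metric_space) \<Rightarrow> ennreal" where
  "endpoint_int_pow e \<mu> p f = (\<integral>\<^sup>+ t. indicator {0..1} t *
      ennreal (dist (f e) (f t) powr p / \<bar>e - t\<bar> powr (\<mu> * p + 1)) \<partial>lborel)"

lemma int_left_pow_eq_endpoint: "int_left_pow \<mu> p f = endpoint_int_pow 0 \<mu> p f"
  unfolding int_left_pow_def endpoint_int_pow_def
  by (intro nn_integral_cong) (auto simp: indicator_def)

lemma int_right_pow_eq_endpoint: "int_right_pow \<mu> p f = endpoint_int_pow 1 \<mu> p f"
  unfolding int_right_pow_def endpoint_int_pow_def ..

lemma endpoint_int_pow_ge_interval:
  fixes f :: "real \<Rightarrow> 'a::metric_space"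
  assumes "0 < g" "0 \<le> c" "0 < p" "0 \<le> \<mu>" "0 \<le> a" "a + g \<le> 1"
    and dist_ge: "\<And>x. x \<in> {a<..<a+g} \<Longrightarrow> c \<le> dist (f e) (f x)"
    and near: "\<And>x. x \<in> {a<..<a+g} \<Longrightarrow> 0 < \<bar>e - x\<bar> \<and> \<bar>e - x\<bar> \<le> D"
  shows "ennreal (g * c powr p / D powr (\<mu> * p + 1)) \<le> endpoint_int_pow e \<mu> p f"
proof -
  let ?k = "c powr p / D powr (\<mu> * p + 1)"
  have "ennreal ?k \<le> indicator {0..1} x * ennreal (dist (f e) (f x) powr p / \<bar>e - x\<bar> powr (\<mu> * p + 1))"
    if x: "x \<in> {a<..<a+g}" for x
  proof -
    have "c powr p \<le> dist (f e) (f x) powr p"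
      using dist_ge[OF x] assms(2,3) by (intro powr_mono2) auto
    moreover have "\<bar>e - x\<bar> powr (\<mu> * p + 1) \<le> D powr (\<mu> * p + 1)"
      using near[OF x] assms by (intro powr_mono2) auto
    moreover have "0 < \<bar>e - x\<bar> powr (\<mu> * p + 1)"
      using near[OF x] by auto
    ultimately have "?k \<le> dist (f e) (f x) powr p / \<bar>e - x\<bar> powr (\<mu> * p + 1)"
      using assms(2) by (intro frac_le) auto
    then show ?thesis
      using x assms by (auto intro: ennreal_leI)
  qed
  then have "ennreal ?k * emeasure lborel {a<..<a+g} \<le> endpoint_int_pow e \<mu> p f"
    unfolding endpoint_int_pow_def by (intro nn_integral_ge_const_on) auto
  then show ?thesis
    using assms(1,2) by (simp add: ennreal_mult[symmetric] mult.commute)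
qed

lemma Lp_pow_ge_const:
  fixes g :: "real \<Rightarrow> 'a::real_normed_vector"
  assumes "0 \<le> c" "0 < p" and norm_ge: "\<And>x. x \<in> {0..1} \<Longrightarrow> c \<le> norm (g x)"
  shows "ennreal (c powr p) \<le> Lp_pow p g"
proof -
  have "ennreal (c powr p) \<le> indicator {0..1} x * ennreal (norm (g x) powr p)" if x: "x \<in> {0..1}" for x
    using norm_ge[OF x] assms x by (auto intro!: ennreal_leI powr_mono2)
  then have "ennreal (c powr p) * emeasure lborel {0..1::real} \<le> Lp_pow p g"
    unfolding Lp_pow_def by (intro nn_integral_ge_const_on) auto
  then show ?thesis
    by simp
qed

lemma le_enn2real: "ennreal x \<le> M \<Longrightarrow> M < \<infinity> \<Longrightarrow> x \<le> enn2real M"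
  using enn2real_mono[of "ennreal x" M] enn2real_nonneg[of M] by (cases "x \<le> 0") (linarith, simp)

lemma Delta_le_Delta_add:
  assumes "dist (f s) (f x) \<le> R" "dist (f t) (f y) \<le> R" "dist (f u) (f z) \<le> R"
  shows "Delta f s t u \<le> Delta f x y z + 2 * R"
proof -
  have "dist (f s) (f t) \<le> dist (f x) (f y) + 2 * R" "dist (f t) (f u) \<le> dist (f y) (f z) + 2 * R"
    using assms dist_triangle[of "f s" "f t" "f x"] dist_triangle[of "f x" "f t" "f y"]
      dist_triangle[of "f t" "f u" "f y"] dist_triangle[of "f y" "f u" "f z"]
    by (simp_all add: dist_commute)
  then show ?thesis
    unfolding Delta_def by linarith
qed

lemma le_by_box_estimate:
  fixes X A h m p \<mu> \<eta> :: real and n :: nat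
  assumes "0 < p" "0 < \<eta>" "0 < h" "0 \<le> m"
    and box: "\<And>c. 0 < c \<Longrightarrow> c + A \<le> X \<Longrightarrow> (\<eta> * h)^n * c powr p / (2 * h) powr (\<mu> * p + n) \<le> m"
  shows "X \<le> A + (2 powr (\<mu> * p + n) / \<eta>^n) powr (1/p) * m powr (1/p) * h powr \<mu>"
proof (cases "X - A > 0")
  case False
  then show ?thesis
    by (smt (verit) mult_nonneg_nonneg powr_ge_zero)
next
  case True
  define c where "c = X - A"
  define K where "K = 2 powr (\<mu> * p + n) / \<eta>^n"
  have K: "0 < K" "0 < h powr (\<mu> * p)"
    using assms unfolding K_def by auto
  have "(2 * h) powr (\<mu> * p + n) = 2 powr (\<mu> * p + n) * (h powr (\<mu> * p) * h^n)"
    using assms by (simp add: powr_mult powr_add powr_realpow)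
  then have "(\<eta> * h)^n * c powr p / (2 * h) powr (\<mu> * p + n) = c powr p / (K * h powr (\<mu> * p))"
    using assms unfolding K_def by (simp add: power_mult_distrib field_simps)
  with box[of c] True have "c powr p / (K * h powr (\<mu> * p)) \<le> m"
    unfolding c_def by simp
  then have "c powr p \<le> K * m * h powr (\<mu> * p)"
    using K by (simp add: pos_divide_le_eq mult_ac)
  then have "(c powr p) powr (1/p) \<le> (K * m * h powr (\<mu> * p)) powr (1/p)"
    using assms by (intro powr_mono2) auto
  then have "c \<le> K powr (1/p) * m powr (1/p) * h powr \<mu>"
    using assms K True unfolding c_def by (simp add: powr_powr powr_mult)
  then show ?thesis
    unfolding c_def K_def by simp
qed

locale holder_control =
  fixes f :: "real \<Rightarrow> 'a::metric_space" and \<mu> H :: real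
  assumes mu_pos: "0 < \<mu>"
    and Delta_le: "0 \<le> s \<Longrightarrow> s \<le> t \<Longrightarrow> t \<le> u \<Longrightarrow> u \<le> 1 \<Longrightarrow> Delta f s t u \<le> H * (u - s) powr \<mu>"
    and endpoint_dist_le: "e \<in> {0, 1} \<Longrightarrow> 0 \<le> t \<Longrightarrow> t \<le> 1 \<Longrightarrow> dist (f e) (f t) \<le> H * \<bar>e - t\<bar> powr \<mu>"
begin

lemma H_nonneg: "0 \<le> H"
proof -
  have "dist (f 0) (f 1) \<le> H"
    using endpoint_dist_le[of 0 1] by simp
  then show ?thesis
    using zero_le_dist order_trans by blast
qed

lemma Delta_le_mono:
  assumes "0 \<le> s" "s \<le> t" "t \<le> u" "u \<le> 1" "u - s \<le> w"
  shows "Delta f s t u \<le> H * w powr \<mu>"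
  using Delta_le[OF assms(1-4)] H_nonneg mu_pos assms
  by (smt (verit) mult_left_mono powr_mono2)

lemma endpoint_dist_le_mono:
  assumes "e \<in> {0, 1}" "0 \<le> t" "t \<le> 1" "\<bar>e - t\<bar> \<le> w"
  shows "dist (f e) (f t) \<le> H * w powr \<mu>"
  using endpoint_dist_le[OF assms(1-3)] H_nonneg mu_pos assms
  by (smt (verit) mult_left_mono powr_mono2)

lemma dist_near_endpoint_le:
  assumes "e \<in> {0, 1}" "0 \<le> x" "x \<le> 1" "0 \<le> y" "y \<le> 1" "\<bar>e - x\<bar> \<le> w" "\<bar>e - y\<bar> \<le> w"
  shows "dist (f x) (f y) \<le> 2 * H * w powr \<mu>"
  using assms dist_triangle[of "f x" "f y" "f e"]
    endpoint_dist_le_mono[of e x w] endpoint_dist_le_mono[of e y w]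
  by (simp add: dist_commute)

lemma flat_after_jump:
  assumes "0 \<le> x" "x \<le> y" "y \<le> z" "z \<le> 1" "z - x \<le> w"
    and "H * w powr \<mu> \<le> B" "B < dist (f x) (f y)"
  shows "dist (f y) (f z) \<le> B"
  using Delta_le_mono[OF assms(1-5)] assms(6,7) by (auto simp: Delta_def min_le_iff_disj)

lemma flat_before_jump:
  assumes "0 \<le> x" "x \<le> y" "y \<le> z" "z \<le> 1" "z - x \<le> w"
    and "H * w powr \<mu> \<le> B" "B < dist (f y) (f z)"
  shows "dist (f x) (f y) \<le> B"
  using Delta_le_mono[OF assms(1-5)] assms(6,7) by (auto simp: Delta_def min_le_iff_disj)

lemma flat_interval:
  assumes g: "0 < g" "g \<le> 1/4" and q: "0 \<le> q" "q \<le> 1"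
  obtains a where "0 \<le> a" "a + g \<le> 1" "q - g \<le> a" "a \<le> q"
    "\<And>x. x \<in> {a<..<a+g} \<Longrightarrow> dist (f q) (f x) \<le> 2 * H * (4*g) powr \<mu>"
proof -
  let ?R = "2 * H * (4*g) powr \<mu>"
  consider "q < g" | "1 - g < q" | "g \<le> q" "q \<le> 1 - g"
    by linarith
  then show ?thesis
  proof cases
    case 1
    then show ?thesis
      using g q dist_near_endpoint_le[of 0 q _ "4*g"] by (intro that[of 0]) auto
  next
    case 2
    then show ?thesis
      using g q dist_near_endpoint_le[of 1 q _ "4*g"] by (intro that[of "1 - g"]) auto
  next
    case 3
    show ?thesis
    proof (cases "\<forall>x\<in>{q-g<..<q}. dist (f q) (f x) \<le> ?R")
      case True
      then show ?thesis
        using 3 g by (intro that[of "q - g"]) auto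
    next
      case False
      then obtain x where x: "x \<in> {q-g<..<q}" and jump: "?R < dist (f x) (f q)"
        by (auto simp: dist_commute)
      have "dist (f q) (f y) \<le> ?R" if "y \<in> {q<..<q+g}" for y
        using that x 3 g jump H_nonneg by (intro flat_after_jump[of x q y "4*g"]) auto
      then show ?thesis
        using 3 g by (intro that[of q]) auto
    qed
  qed
qed

lemma int_mid_pow_ge_flat_boxes:
  assumes "0 < p" "0 < g" "0 < c" "c + 4 * H * (4*g) powr \<mu> \<le> Delta f s t u"
    and "0 \<le> a1" "a1 + g \<le> a2" "a2 + g \<le> a3" "a3 + g \<le> 1" "a3 + g - a1 \<le> D"
    and "\<And>x. x \<in> {a1<..<a1+g} \<Longrightarrow> dist (f s) (f x) \<le> 2 * H * (4*g) powr \<mu>"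
    and "\<And>y. y \<in> {a2<..<a2+g} \<Longrightarrow> dist (f t) (f y) \<le> 2 * H * (4*g) powr \<mu>"
    and "\<And>z. z \<in> {a3<..<a3+g} \<Longrightarrow> dist (f u) (f z) \<le> 2 * H * (4*g) powr \<mu>"
  shows "ennreal (g^3 * c powr p / D powr (\<mu> * p + 3)) \<le> int_mid_pow \<mu> p f"
proof (rule int_mid_pow_ge_box)
  fix x y z
  assume "x \<in> {a1<..<a1+g}" "y \<in> {a2<..<a2+g}" "z \<in> {a3<..<a3+g}"
  then have "Delta f s t u \<le> Delta f x y z + 2 * (2 * H * (4*g) powr \<mu>)"
    using assms(10-12) by (intro Delta_le_Delta_add)
  then show "c \<le> Delta f x y z"
    using assms(4) by simp
qed (use assms mu_pos in auto)

lemma int_mid_pow_ge_apart: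
  assumes "0 < p" "0 < g" "0 \<le> s" "s + 2 * g \<le> t" "t + 2 * g \<le> u" "u \<le> 1"
    and "0 < c" and jump: "c + 4 * H * (4*g) powr \<mu> \<le> Delta f s t u"
  shows "ennreal (g^3 * c powr p / (2 * (u - s)) powr (\<mu> * p + 3)) \<le> int_mid_pow \<mu> p f"
proof -
  have g: "g \<le> 1/4"
    using assms(2-6) by linarith
  obtain a1 where a1: "0 \<le> a1" "a1 + g \<le> 1" "s - g \<le> a1" "a1 \<le> s"
    "\<And>x. x \<in> {a1<..<a1+g} \<Longrightarrow> dist (f s) (f x) \<le> 2 * H * (4*g) powr \<mu>"
    by (rule flat_interval[OF \<open>0 < g\<close> g, of s]) (use assms in auto)
  obtain a2 where a2: "0 \<le> a2" "a2 + g \<le> 1" "t - g \<le> a2" "a2 \<le> t"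
    "\<And>y. y \<in> {a2<..<a2+g} \<Longrightarrow> dist (f t) (f y) \<le> 2 * H * (4*g) powr \<mu>"
    by (rule flat_interval[OF \<open>0 < g\<close> g, of t]) (use assms in auto)
  obtain a3 where a3: "0 \<le> a3" "a3 + g \<le> 1" "u - g \<le> a3" "a3 \<le> u"
    "\<And>z. z \<in> {a3<..<a3+g} \<Longrightarrow> dist (f u) (f z) \<le> 2 * H * (4*g) powr \<mu>"
    by (rule flat_interval[OF \<open>0 < g\<close> g, of u]) (use assms in auto)
  show ?thesis
  proof (rule int_mid_pow_ge_flat_boxes[OF \<open>0 < p\<close> \<open>0 < g\<close> \<open>0 < c\<close> jump])
    show "a1 + g \<le> a2" "a2 + g \<le> a3"
      using assms(4,5) a1(4) a2(3,4) a3(3) by linarith+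
    show "a3 + g - a1 \<le> 2 * (u - s)"
      using assms(2,4,5) a1(3) a3(4) by (simp add: algebra_simps)
  qed (fact a1(1,5) a2(5) a3(2,5))+
qed

text \<open>When \<open>s\<close> and \<open>t\<close> are close, the large jump between them keeps \<open>f\<close> flat just left of \<open>s\<close>
  and just right of \<open>t\<close>.\<close>
lemma int_mid_pow_ge_close_left:
  assumes "0 < p" "0 < g" "4 * g \<le> u - s" "0 \<le> s" "s \<le> t" "t - s < 2 * g" "u \<le> 1"
    and "0 < c" and jump: "c + 4 * H * (4*g) powr \<mu> \<le> Delta f s t u"
  shows "ennreal (g^3 * c powr p / (2 * (u - s)) powr (\<mu> * p + 3)) \<le> int_mid_pow \<mu> p f"
proof -
  let ?R = "2 * H * (4*g) powr \<mu>"
  have r: "0 \<le> H * (4*g) powr \<mu>"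
    using H_nonneg by simp
  then have R: "H * (4*g) powr \<mu> \<le> ?R"
    by simp
  have jump_st: "?R < dist (f s) (f t)"
    using jump \<open>0 < c\<close> r unfolding Delta_def by linarith
  have g: "g \<le> 1/4"
    using assms(3,4,7) by linarith
  have "g \<le> s"
  proof (rule ccontr)
    assume "\<not> g \<le> s"
    then have "dist (f s) (f t) \<le> ?R"
      using assms by (intro dist_near_endpoint_le[of 0 s t "4*g"]) auto
    with jump_st show False
      by simp
  qed
  obtain a3 where a3: "0 \<le> a3" "a3 + g \<le> 1" "u - g \<le> a3" "a3 \<le> u"
    "\<And>z. z \<in> {a3<..<a3+g} \<Longrightarrow> dist (f u) (f z) \<le> ?R"
    by (rule flat_interval[OF \<open>0 < g\<close> g, of u]) (use assms in auto)
  have "dist (f x) (f s) \<le> ?R" if "x \<in> {s-g<..<s-g+g}" for x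
    using that \<open>g \<le> s\<close> assms R jump_st by (intro flat_before_jump[of x s t "4*g"]) auto
  moreover have "dist (f t) (f y) \<le> ?R" if "y \<in> {t<..<t+g}" for y
    using that a3 assms R jump_st by (intro flat_after_jump[of s t y "4*g"]) auto
  ultimately show ?thesis
  proof (intro int_mid_pow_ge_flat_boxes[OF \<open>0 < p\<close> \<open>0 < g\<close> \<open>0 < c\<close> jump, of "s - g" t a3])
    show "t + g \<le> a3"
      using assms(3,6) a3(3) by linarith
    show "a3 + g - (s - g) \<le> 2 * (u - s)"
      using assms(2,3) a3(4) by (simp add: algebra_simps)
  qed (use \<open>g \<le> s\<close> \<open>s \<le> t\<close> a3 in \<open>auto simp: dist_commute\<close>)
qed

lemma int_mid_pow_ge_close_right:
  assumes "0 < p" "0 < g" "4 * g \<le> u - s" "0 \<le> s" "t \<le> u" "u - t < 2 * g" "u \<le> 1"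
    and "0 < c" and jump: "c + 4 * H * (4*g) powr \<mu> \<le> Delta f s t u"
  shows "ennreal (g^3 * c powr p / (2 * (u - s)) powr (\<mu> * p + 3)) \<le> int_mid_pow \<mu> p f"
proof -
  let ?R = "2 * H * (4*g) powr \<mu>"
  have r: "0 \<le> H * (4*g) powr \<mu>"
    using H_nonneg by simp
  then have R: "H * (4*g) powr \<mu> \<le> ?R"
    by simp
  have jump_tu: "?R < dist (f t) (f u)"
    using jump \<open>0 < c\<close> r unfolding Delta_def by linarith
  have g: "g \<le> 1/4"
    using assms(3,4,7) by linarith
  have "u \<le> 1 - g"
  proof (rule ccontr)
    assume "\<not> u \<le> 1 - g"
    then have "dist (f t) (f u) \<le> ?R"
      using assms by (intro dist_near_endpoint_le[of 1 t u "4*g"]) auto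
    with jump_tu show False
      by simp
  qed
  obtain a1 where a1: "0 \<le> a1" "a1 + g \<le> 1" "s - g \<le> a1" "a1 \<le> s"
    "\<And>x. x \<in> {a1<..<a1+g} \<Longrightarrow> dist (f s) (f x) \<le> ?R"
    by (rule flat_interval[OF \<open>0 < g\<close> g, of s]) (use assms in auto)
  have "dist (f y) (f t) \<le> ?R" if "y \<in> {t-g<..<t-g+g}" for y
    using that a1 assms R jump_tu by (intro flat_before_jump[of y t u "4*g"]) auto
  moreover have "dist (f u) (f z) \<le> ?R" if "z \<in> {u<..<u+g}" for z
    using that \<open>u \<le> 1 - g\<close> assms R jump_tu by (intro flat_after_jump[of t u z "4*g"]) auto
  ultimately show ?thesis
  proof (intro int_mid_pow_ge_flat_boxes[OF \<open>0 < p\<close> \<open>0 < g\<close> \<open>0 < c\<close> jump, of a1 "t - g" u])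
    show "a1 + g \<le> t - g"
      using assms(3,6) a1(4) by linarith
    show "u + g - a1 \<le> 2 * (u - s)"
      using assms(2,3) a1(3) by (simp add: algebra_simps)
  qed (use \<open>u \<le> 1 - g\<close> a1 assms in \<open>auto simp: dist_commute\<close>)
qed

lemma int_mid_pow_ge:
  assumes "0 < p" "0 < g" "4 * g \<le> u - s" "0 \<le> s" "s \<le> t" "t \<le> u" "u \<le> 1"
    and "0 < c" and "c + 4 * H * (4*g) powr \<mu> \<le> Delta f s t u"
  shows "ennreal (g^3 * c powr p / (2 * (u - s)) powr (\<mu> * p + 3)) \<le> int_mid_pow \<mu> p f"
proof -
  consider "t - s < 2 * g" | "u - t < 2 * g" | "s + 2 * g \<le> t" "t + 2 * g \<le> u"
    by linarith
  then show ?thesis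
  proof cases
    case 1
    with assms show ?thesis
      by (intro int_mid_pow_ge_close_left) auto
  next
    case 2
    with assms show ?thesis
      by (intro int_mid_pow_ge_close_right) auto
  next
    case 3
    with assms show ?thesis
      by (intro int_mid_pow_ge_apart) auto
  qed
qed

lemma endpoint_int_pow_ge:
  assumes "e \<in> {0, 1}" "0 < p" "0 < g" "4 * g \<le> \<bar>e - t\<bar>" "0 \<le> t" "t \<le> 1"
    and "0 < c" and jump: "c + 2 * H * (4*g) powr \<mu> \<le> dist (f e) (f t)"
  shows "ennreal (g * c powr p / (2 * \<bar>e - t\<bar>) powr (\<mu> * p + 1)) \<le> endpoint_int_pow e \<mu> p f"
proof -
  have g: "g \<le> 1/4"
    using assms(1,4-6) by auto
  obtain a where a: "0 \<le> a" "a + g \<le> 1" "t - g \<le> a" "a \<le> t"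
    "\<And>x. x \<in> {a<..<a+g} \<Longrightarrow> dist (f t) (f x) \<le> 2 * H * (4*g) powr \<mu>"
    by (rule flat_interval[OF \<open>0 < g\<close> g, of t]) (use assms in auto)
  show ?thesis
  proof (rule endpoint_int_pow_ge_interval)
    fix x
    assume x: "x \<in> {a<..<a+g}"
    show "c \<le> dist (f e) (f x)"
      using jump a(5)[OF x] dist_triangle[of "f e" "f t" "f x"] dist_commute[of "f x" "f t"] by linarith
    have "\<bar>x - t\<bar> < g"
      using x a(3,4) by auto
    then show "0 < \<bar>e - x\<bar> \<and> \<bar>e - x\<bar> \<le> 2 * \<bar>e - t\<bar>"
      using assms(3,4) by (auto simp: abs_if split: if_splits)
  qed (use assms a mu_pos in auto)
qed

lemma Delta_le_int_mid_pow:
  assumes "0 < \<eta>" "\<eta> \<le> 1/4" "0 < p" "int_mid_pow \<mu> p f < \<infinity>"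
    and "0 \<le> s" "s \<le> t" "t \<le> u" "u \<le> 1"
  shows "Delta f s t u \<le> (4 * H * (4*\<eta>) powr \<mu>
    + (2 powr (\<mu> * p + 3) / \<eta>^3) powr (1/p) * enn2real (int_mid_pow \<mu> p f) powr (1/p)) * (u - s) powr \<mu>"
proof (cases "s < u")
  case False
  with assms have "s = t" "t = u"
    by auto
  then show ?thesis
    by (simp add: Delta_def)
next
  case True
  define h where "h = u - s"
  have h: "0 < h" "(4 * (\<eta> * h)) powr \<mu> = (4*\<eta>) powr \<mu> * h powr \<mu>"
    using True assms(1) unfolding h_def by (simp_all add: powr_mult[symmetric] mult.assoc)
  have "Delta f s t u \<le> 4 * H * (4*\<eta>) powr \<mu> * h powr \<mu>
    + (2 powr (\<mu> * p + 3) / \<eta>^3) powr (1/p) * enn2real (int_mid_pow \<mu> p f) powr (1/p) * h powr \<mu>"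
  proof (rule le_by_box_estimate[where n = 3, simplified])
    fix c :: real
    assume "0 < c" "c + 4 * H * (4*\<eta>) powr \<mu> * h powr \<mu> \<le> Delta f s t u"
    then have "ennreal ((\<eta> * h)^3 * c powr p / (2 * h) powr (\<mu> * p + 3)) \<le> int_mid_pow \<mu> p f"
      using assms h unfolding h_def by (intro int_mid_pow_ge) (auto simp: mult.assoc)
    then show "(\<eta> * h)^3 * c powr p / (2 * h) powr (\<mu> * p + 3) \<le> enn2real (int_mid_pow \<mu> p f)"
      using assms(4) by (rule le_enn2real)
  qed (use assms h in auto)
  then show ?thesis
    unfolding h_def by (simp add: algebra_simps)
qed

lemma endpoint_dist_le_int_pow:
  assumes "0 < \<eta>" "\<eta> \<le> 1/4" "0 < p" "endpoint_int_pow e \<mu> p f < \<infinity>"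
    and "e \<in> {0, 1}" "0 \<le> t" "t \<le> 1"
  shows "dist (f e) (f t) \<le> (2 * H * (4*\<eta>) powr \<mu>
    + (2 powr (\<mu> * p + 1) / \<eta>) powr (1/p) * enn2real (endpoint_int_pow e \<mu> p f) powr (1/p)) * \<bar>e - t\<bar> powr \<mu>"
proof (cases "t = e")
  case True
  then show ?thesis
    by simp
next
  case False
  define h where "h = \<bar>e - t\<bar>"
  have h: "0 < h" "(4 * (\<eta> * h)) powr \<mu> = (4*\<eta>) powr \<mu> * h powr \<mu>"
    using False assms(1) unfolding h_def by (simp_all add: powr_mult[symmetric] mult.assoc)
  have "dist (f e) (f t) \<le> 2 * H * (4*\<eta>) powr \<mu> * h powr \<mu>
    + (2 powr (\<mu> * p + 1) / \<eta>) powr (1/p) * enn2real (endpoint_int_pow e \<mu> p f) powr (1/p) * h powr \<mu>"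
  proof (rule le_by_box_estimate[where n = 1, simplified])
    fix c :: real
    assume "0 < c" "c + 2 * H * (4*\<eta>) powr \<mu> * h powr \<mu> \<le> dist (f e) (f t)"
    then have "ennreal (\<eta> * h * c powr p / (2 * h) powr (\<mu> * p + 1)) \<le> endpoint_int_pow e \<mu> p f"
      using assms h unfolding h_def by (intro endpoint_int_pow_ge) (auto simp: mult.assoc)
    then show "\<eta> * h * c powr p / (2 * h) powr (\<mu> * p + 1) \<le> enn2real (endpoint_int_pow e \<mu> p f)"
      using assms(4) by (rule le_enn2real)
  qed (use assms h in auto)
  then show ?thesis
    unfolding h_def by (simp add: algebra_simps)
qed

lemma hol_mid_le_int_mid_pow:
  assumes "0 < \<eta>" "\<eta> \<le> 1/4" "0 < p" "int_mid_pow \<mu> p f < \<infinity>"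
  shows "hol_mid \<mu> f \<le> 4 * H * (4*\<eta>) powr \<mu>
    + (2 powr (\<mu> * p + 3) / \<eta>^3) powr (1/p) * enn2real (int_mid_pow \<mu> p f) powr (1/p)"
    (is "_ \<le> ?B")
  unfolding hol_mid_def
proof (rule cSup_least)
  show "hol_mid_set \<mu> f \<noteq> {}"
    unfolding hol_mid_set_def by blast
next
  fix v
  assume "v \<in> hol_mid_set \<mu> f"
  then obtain s t u where v: "v = Delta f s t u / \<bar>u - s\<bar> powr \<mu>"
    and stu: "0 \<le> s" "s \<le> t" "t \<le> u" "u \<le> 1"
    unfolding hol_mid_set_def by blast
  have "Delta f s t u \<le> ?B * (u - s) powr \<mu>"
    using Delta_le_int_mid_pow[OF assms stu] .
  moreover have "0 \<le> ?B"
    using H_nonneg by simp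
  ultimately show "v \<le> ?B"
    using v stu by (cases "s = u") (auto simp: divide_le_eq)
qed

lemma hol_left_le_int_left_pow:
  assumes "0 < \<eta>" "\<eta> \<le> 1/4" "0 < p" "int_left_pow \<mu> p f < \<infinity>"
  shows "hol_left \<mu> f \<le> 2 * H * (4*\<eta>) powr \<mu>
    + (2 powr (\<mu> * p + 1) / \<eta>) powr (1/p) * enn2real (int_left_pow \<mu> p f) powr (1/p)"
    (is "_ \<le> ?B")
  unfolding hol_left_def
proof (rule cSup_least)
  show "hol_left_set \<mu> f \<noteq> {}"
    unfolding hol_left_set_def by (auto intro: exI[of _ 1])
next
  fix v
  assume "v \<in> hol_left_set \<mu> f"
  then obtain t where v: "v = dist (f 0) (f t) / t powr \<mu>" and t: "0 < t" "t \<le> 1"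
    unfolding hol_left_set_def by auto
  have "dist (f 0) (f t) \<le> ?B * t powr \<mu>"
    using endpoint_dist_le_int_pow[of \<eta> p 0 t] assms t by (simp add: int_left_pow_eq_endpoint)
  then show "v \<le> ?B"
    using v t by (simp add: divide_le_eq)
qed

lemma hol_right_le_int_right_pow:
  assumes "0 < \<eta>" "\<eta> \<le> 1/4" "0 < p" "int_right_pow \<mu> p f < \<infinity>"
  shows "hol_right \<mu> f \<le> 2 * H * (4*\<eta>) powr \<mu>
    + (2 powr (\<mu> * p + 1) / \<eta>) powr (1/p) * enn2real (int_right_pow \<mu> p f) powr (1/p)"
    (is "_ \<le> ?B")
  unfolding hol_right_def
proof (rule cSup_least)
  show "hol_right_set \<mu> f \<noteq> {}"
    unfolding hol_right_set_def by auto
next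
  fix v
  assume "v \<in> hol_right_set \<mu> f"
  then obtain t where v: "v = dist (f 1) (f t) / \<bar>1 - t\<bar> powr \<mu>" and t: "0 \<le> t" "t < 1"
    unfolding hol_right_set_def by auto
  have "dist (f 1) (f t) \<le> ?B * \<bar>1 - t\<bar> powr \<mu>"
    using endpoint_dist_le_int_pow[of \<eta> p 1 t] assms t by (simp add: int_right_pow_eq_endpoint)
  then show "v \<le> ?B"
    using v t by (simp add: divide_le_eq)
qed

end

lemma le_Sup_mult:
  fixes S :: "real set"
  assumes "bdd_above S" "a / b \<in> S" "0 < b"
  shows "a \<le> Sup S * b"
  using cSup_upper[OF assms(2,1)] assms(3) by (simp add: divide_le_eq)

lemma Dmu_Delta_le:
  assumes "f \<in> Dmu \<mu>" "0 \<le> s" "s \<le> t" "t \<le> u" "u \<le> 1" "s < u"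
  shows "Delta f s t u \<le> hol_mid \<mu> f * (u - s) powr \<mu>"
proof -
  have "Delta f s t u / (u - s) powr \<mu> \<in> hol_mid_set \<mu> f"
    unfolding hol_mid_set_def using assms(2-6) by force
  then show ?thesis
    using assms unfolding hol_mid_def Dmu_def by (intro le_Sup_mult) auto
qed

lemma Dmu_left_dist_le:
  assumes "f \<in> Dmu \<mu>" "0 < t" "t \<le> 1"
  shows "dist (f 0) (f t) \<le> hol_left \<mu> f * t powr \<mu>"
proof -
  have "dist (f 0) (f t) / t powr \<mu> \<in> hol_left_set \<mu> f"
    unfolding hol_left_set_def using assms(2,3) by auto
  then show ?thesis
    using assms unfolding hol_left_def Dmu_def by (intro le_Sup_mult) auto
qed

lemma Dmu_right_dist_le:
  assumes "f \<in> Dmu \<mu>" "0 \<le> t" "t < 1"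
  shows "dist (f 1) (f t) \<le> hol_right \<mu> f * (1 - t) powr \<mu>"
proof -
  have "dist (f 1) (f t) / (1 - t) powr \<mu> \<in> hol_right_set \<mu> f"
    unfolding hol_right_set_def using assms(2,3) by force
  then show ?thesis
    using assms unfolding hol_right_def Dmu_def by (intro le_Sup_mult) auto
qed

lemma Dmu_hol_nonneg:
  assumes "f \<in> Dmu \<mu>"
  shows "0 \<le> hol_mid \<mu> f" "0 \<le> hol_left \<mu> f" "0 \<le> hol_right \<mu> f"
proof -
  have "0 \<le> Delta f 0 0 1" "dist (f 0) (f 1) \<le> hol_left \<mu> f" "dist (f 1) (f 0) \<le> hol_right \<mu> f"
    using Dmu_left_dist_le[OF assms, of 1] Dmu_right_dist_le[OF assms, of 0] by (simp_all add: Delta_def)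
  moreover have "Delta f 0 0 1 \<le> hol_mid \<mu> f"
    using Dmu_Delta_le[OF assms, of 0 0 1] by simp
  ultimately show "0 \<le> hol_mid \<mu> f" "0 \<le> hol_left \<mu> f" "0 \<le> hol_right \<mu> f"
    by (meson zero_le_dist order_trans)+
qed

lemma holder_control_Dmu:
  assumes f: "f \<in> Dmu \<mu>" and "0 < \<mu>"
  shows "holder_control f \<mu> (hol_mid \<mu> f + hol_left \<mu> f + hol_right \<mu> f)"
proof
  note nonneg = Dmu_hol_nonneg[OF f]
  show "0 < \<mu>"
    by fact
  fix s t u :: real
  assume stu: "0 \<le> s" "s \<le> t" "t \<le> u" "u \<le> 1"
  show "Delta f s t u \<le> (hol_mid \<mu> f + hol_left \<mu> f + hol_right \<mu> f) * (u - s) powr \<mu>"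
  proof (cases "s < u")
    case True
    then show ?thesis
      using Dmu_Delta_le[OF f stu True] nonneg by (smt (verit) mult_right_mono powr_ge_zero)
  next
    case False
    with stu have "s = t" "t = u"
      by auto
    then show ?thesis
      by (simp add: Delta_def)
  qed
next
  note nonneg = Dmu_hol_nonneg[OF f]
  fix e t :: real
  assume e: "e \<in> {0, 1}" and t: "0 \<le> t" "t \<le> 1"
  show "dist (f e) (f t) \<le> (hol_mid \<mu> f + hol_left \<mu> f + hol_right \<mu> f) * \<bar>e - t\<bar> powr \<mu>"
  proof (cases "t = e")
    case False
    with e t have "dist (f e) (f t) \<le> (if e = 0 then hol_left \<mu> f else hol_right \<mu> f) * \<bar>e - t\<bar> powr \<mu>"
      using Dmu_left_dist_le[OF f, of t] Dmu_right_dist_le[OF f, of t] by auto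
    then show ?thesis
      using nonneg by (smt (verit) mult_right_mono powr_ge_zero)
  qed simp
qed

definition box_ratio :: "real \<Rightarrow> real" where
  "box_ratio \<mu> = (1/16) powr (1/\<mu>) / 4"

lemma box_ratio:
  assumes "0 < \<mu>"
  shows "0 < box_ratio \<mu>" "box_ratio \<mu> \<le> 1/4" "(4 * box_ratio \<mu>) powr \<mu> = 1/16"
proof -
  show "0 < box_ratio \<mu>"
    unfolding box_ratio_def by simp
  have "(1/16::real) powr (1/\<mu>) \<le> 1"
    using assms by (intro powr_le1) auto
  then show "box_ratio \<mu> \<le> 1/4"
    unfolding box_ratio_def by simp
  show "(4 * box_ratio \<mu>) powr \<mu> = 1/16"
    using assms unfolding box_ratio_def by (simp add: powr_powr)
qed

definition holder_const :: "real \<Rightarrow> real \<Rightarrow> real" where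
  "holder_const \<mu> p = 2 * ((2 powr (\<mu> * p + 3) / box_ratio \<mu> ^ 3) powr (1/p)
                          + (2 powr (\<mu> * p + 1) / box_ratio \<mu>) powr (1/p))"

lemma holder_const_nonneg: "0 \<le> holder_const \<mu> p"
  unfolding holder_const_def by simp

lemma holder_seminorms_le_integrals:
  fixes f :: "real \<Rightarrow> 'a::metric_space"
  assumes f: "f \<in> Dmu \<mu>" and "0 < \<mu>" "0 < p"
    and "int_mid_pow \<mu> p f < \<infinity>" "int_left_pow \<mu> p f < \<infinity>" "int_right_pow \<mu> p f < \<infinity>"
  shows "hol_mid \<mu> f + hol_left \<mu> f + hol_right \<mu> f \<le> holder_const \<mu> p *
    (enn2real (int_mid_pow \<mu> p f) powr (1/p) + enn2real (int_left_pow \<mu> p f) powr (1/p)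
      + enn2real (int_right_pow \<mu> p f) powr (1/p))"
proof -
  define H where "H = hol_mid \<mu> f + hol_left \<mu> f + hol_right \<mu> f"
  define Am where "Am = (2 powr (\<mu> * p + 3) / box_ratio \<mu> ^ 3) powr (1/p)"
  define Ae where "Ae = (2 powr (\<mu> * p + 1) / box_ratio \<mu>) powr (1/p)"
  define m where "m = enn2real (int_mid_pow \<mu> p f) powr (1/p)"
  define l where "l = enn2real (int_left_pow \<mu> p f) powr (1/p)"
  define r where "r = enn2real (int_right_pow \<mu> p f) powr (1/p)"
  interpret holder_control f \<mu> H
    unfolding H_def using f \<open>0 < \<mu>\<close> by (rule holder_control_Dmu)
  define S where "S = Am * m + Ae * l + Ae * r"
  note \<eta> = box_ratio[OF \<open>0 < \<mu>\<close>]
  have "hol_mid \<mu> f \<le> H/4 + Am * m"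
    using hol_mid_le_int_mid_pow[OF \<eta>(1,2)] \<eta>(3) assms unfolding Am_def m_def by simp
  moreover have "hol_left \<mu> f \<le> H/8 + Ae * l"
    using hol_left_le_int_left_pow[OF \<eta>(1,2)] \<eta>(3) assms unfolding Ae_def l_def by simp
  moreover have "hol_right \<mu> f \<le> H/8 + Ae * r"
    using hol_right_le_int_right_pow[OF \<eta>(1,2)] \<eta>(3) assms unfolding Ae_def r_def by simp
  ultimately have "H \<le> H/2 + S"
    unfolding S_def H_def by linarith
  then have "H \<le> 2 * S"
    by linarith
  also have "\<dots> \<le> holder_const \<mu> p * (m + l + r)"
    unfolding S_def holder_const_def Am_def Ae_def m_def l_def r_def by (simp add: algebra_simps)
  finally show ?thesis
    unfolding H_def m_def l_def r_def .
qed

lemma Sup_norm_le_hol_left_Lp: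
  fixes g :: "real \<Rightarrow> 'a::real_normed_vector"
  assumes g: "g \<in> Dmu \<mu>" and "0 \<le> \<mu>" "0 < p" "Lp_pow p g < \<infinity>"
  shows "(SUP t\<in>{0..1}. norm (g t)) \<le> 2 * hol_left \<mu> g + enn2real (Lp_pow p g) powr (1/p)"
proof -
  define Hl where "Hl = hol_left \<mu> g"
  define L where "L = enn2real (Lp_pow p g) powr (1/p)"
  have L_nonneg: "0 \<le> L"
    unfolding L_def by (rule powr_ge_zero)
  have osc: "dist (g 0) (g t) \<le> Hl" if "t \<in> {0..1}" for t
  proof (cases "t = 0")
    case False
    then have "dist (g 0) (g t) \<le> Hl * t powr \<mu>"
      using that Dmu_left_dist_le[OF g] unfolding Hl_def by simp
    also have "\<dots> \<le> Hl"
      using that Dmu_hol_nonneg[OF g] \<open>0 \<le> \<mu>\<close> unfolding Hl_def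
      by (intro mult_left_le powr_le1) auto
    finally show ?thesis .
  qed (use Dmu_hol_nonneg[OF g] in \<open>simp add: Hl_def\<close>)
  have "norm (g 0) \<le> Hl + L"
  proof (cases "norm (g 0) \<le> Hl")
    case False
    have "norm (g 0) - Hl \<le> norm (g t)" if "t \<in> {0..1}" for t
      using osc[OF that] norm_triangle_ineq2[of "g 0" "g t"] by (simp add: dist_norm)
    then have "ennreal ((norm (g 0) - Hl) powr p) \<le> Lp_pow p g"
      using False \<open>0 < p\<close> by (intro Lp_pow_ge_const) auto
    then have "(norm (g 0) - Hl) powr p \<le> enn2real (Lp_pow p g)"
      using assms(4) by (rule le_enn2real)
    then have "((norm (g 0) - Hl) powr p) powr (1/p) \<le> L"
      unfolding L_def using \<open>0 < p\<close> by (intro powr_mono2) auto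
    then show ?thesis
      using False \<open>0 < p\<close> by (simp add: powr_powr)
  qed (use L_nonneg in linarith)
  then have "norm (g t) \<le> 2 * Hl + L" if "t \<in> {0..1}" for t
    using osc[OF that] norm_triangle_ineq3[of "g t" "g 0"] by (simp add: dist_norm norm_minus_commute)
  then show ?thesis
    unfolding Hl_def L_def by (intro cSUP_least) auto
qed

lemma Sup_norm_le_integrals:
  fixes g :: "real \<Rightarrow> 'a::real_normed_vector"
  assumes g: "g \<in> Dmu \<mu>" and "0 < \<mu>" "0 < p" "Lp_pow p g < \<infinity>"
    and "int_mid_pow \<mu> p g < \<infinity>" "int_left_pow \<mu> p g < \<infinity>" "int_right_pow \<mu> p g < \<infinity>"
  shows "(SUP t\<in>{0..1}. norm (g t)) \<le> (2 * holder_const \<mu> p + 1) * (enn2real (Lp_pow p g) powr (1/p)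
    + enn2real (int_mid_pow \<mu> p g) powr (1/p) + enn2real (int_left_pow \<mu> p g) powr (1/p)
    + enn2real (int_right_pow \<mu> p g) powr (1/p))"
proof -
  define C where "C = holder_const \<mu> p"
  let ?L = "enn2real (Lp_pow p g) powr (1/p)"
  let ?K = "enn2real (int_mid_pow \<mu> p g) powr (1/p) + enn2real (int_left_pow \<mu> p g) powr (1/p)
    + enn2real (int_right_pow \<mu> p g) powr (1/p)"
  have C: "0 \<le> C" and KL: "0 \<le> ?K" "0 \<le> ?L"
    unfolding C_def by (intro holder_const_nonneg add_nonneg_nonneg powr_ge_zero)+
  have "hol_mid \<mu> g + hol_left \<mu> g + hol_right \<mu> g \<le> C * ?K"
    unfolding C_def using assms by (intro holder_seminorms_le_integrals)
  then have left: "hol_left \<mu> g \<le> C * ?K"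
    using Dmu_hol_nonneg[OF g] by linarith
  have "(SUP t\<in>{0..1}. norm (g t)) \<le> 2 * hol_left \<mu> g + ?L"
    using assms by (intro Sup_norm_le_hol_left_Lp) auto
  also have "\<dots> \<le> 2 * (C * ?K) + ?L"
    using left by simp
  also have "\<dots> \<le> (2 * C + 1) * (?L + ?K)"
    using mult_nonneg_nonneg[OF C KL(2)] KL by (simp add: algebra_simps)
  finally show ?thesis
    unfolding C_def by (simp add: add.assoc)
qed

theorem theorem1:
  fixes p \<mu> :: real
  assumes "p > 1" and "0 < \<mu>" and "\<mu> < 1"
  shows "\<exists>C>0.
    (\<forall>f::real \<Rightarrow> 'a::polish_space. f \<in> Dmu \<mu> \<longrightarrow>
       int_mid_pow \<mu> p f < \<infinity> \<longrightarrow> int_left_pow \<mu> p f < \<infinity> \<longrightarrow> int_right_pow \<mu> p f < \<infinity> \<longrightarrow>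
       hol_mid \<mu> f + hol_left \<mu> f + hol_right \<mu> f
         \<le> C * (enn2real (int_mid_pow \<mu> p f) powr (1/p) + enn2real (int_left_pow \<mu> p f) powr (1/p)
                + enn2real (int_right_pow \<mu> p f) powr (1/p)))
  \<and> (\<forall>g::real \<Rightarrow> real ^ 'n. g \<in> Dmu \<mu> \<longrightarrow>
       Lp_pow p g < \<infinity> \<longrightarrow>
       int_mid_pow \<mu> p g < \<infinity> \<longrightarrow> int_left_pow \<mu> p g < \<infinity> \<longrightarrow> int_right_pow \<mu> p g < \<infinity> \<longrightarrow>
       (SUP t\<in>{0..1}. norm (g t))
         \<le> C * (enn2real (Lp_pow p g) powr (1/p) + enn2real (int_mid_pow \<mu> p g) powr (1/p)
                + enn2real (int_left_pow \<mu> p g) powr (1/p) + enn2real (int_right_pow \<mu> p g) powr (1/p)))"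
proof (intro exI[of _ "2 * holder_const \<mu> p + 1"] conjI allI impI)
  have p: "0 < p"
    using assms(1) by simp
  show "0 < 2 * holder_const \<mu> p + 1"
    using holder_const_nonneg[of \<mu> p] by simp
  fix f :: "real \<Rightarrow> 'a::polish_space"
  assume "f \<in> Dmu \<mu>" "int_mid_pow \<mu> p f < \<infinity>" "int_left_pow \<mu> p f < \<infinity>" "int_right_pow \<mu> p f < \<infinity>"
  then have "hol_mid \<mu> f + hol_left \<mu> f + hol_right \<mu> f \<le> holder_const \<mu> p *
    (enn2real (int_mid_pow \<mu> p f) powr (1/p) + enn2real (int_left_pow \<mu> p f) powr (1/p)
      + enn2real (int_right_pow \<mu> p f) powr (1/p))" (is "_ \<le> _ * ?K")
    using assms(2) p by (intro holder_seminorms_le_integrals)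
  also have "\<dots> \<le> (2 * holder_const \<mu> p + 1) * ?K"
    using holder_const_nonneg[of \<mu> p] by (intro mult_right_mono) auto
  finally show "hol_mid \<mu> f + hol_left \<mu> f + hol_right \<mu> f \<le> (2 * holder_const \<mu> p + 1) * ?K" .
next
  fix g :: "real \<Rightarrow> real ^ 'n"
  assume "g \<in> Dmu \<mu>" "Lp_pow p g < \<infinity>"
    "int_mid_pow \<mu> p g < \<infinity>" "int_left_pow \<mu> p g < \<infinity>" "int_right_pow \<mu> p g < \<infinity>"
  then show "(SUP t\<in>{0..1}. norm (g t)) \<le> (2 * holder_const \<mu> p + 1) * (enn2real (Lp_pow p g) powr (1/p)
      + enn2real (int_mid_pow \<mu> p g) powr (1/p) + enn2real (int_left_pow \<mu> p g) powr (1/p)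
      + enn2real (int_right_pow \<mu> p g) powr (1/p))"
    using assms(1,2) by (intro Sup_norm_le_integrals) auto
qed

end
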